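(* For every positive integer $n$, the average value of the Wiener index over $\mathcal{G}_n$ is $$W_{avr}(\mathcal{G}_n)=\frac{1}{|\mathcal{G}_n|}\sum_{G\in\mathcal{G}_n}W(G)=\frac13\left(25n^3+60n^2-4n\right).$$
   Context: The Wiener index is $W(G)=\sum_{\{u,v\}\subseteq V(G)}d_G(u,v)$, $d_G$ the shortest-path distance. A spiro hexagonal chain $G_n=H_0H_1\cdots H_{n-1}$ with $n$ hexagons is a connected graph whose blocks are hexagons (6-cycles) $H_0,\dots,H_{n-1}$, each hexagon having at most two cut-vertices, each cut-vertex shared by exactly two hexagons, and $H_{k-1},H_k$ sharing the cut-vertex $c_k$ ($1\le k\le n-1$). For $1\le i\le n-2$, the hexagon $H_i$ is labelled $O$, $M$ or $P$ according as the distance in $H_i$ between $c_i$ and $c_{i+1}$ is $1$, $2$ or $3$; the word $x_1x_2\cdots x_{n-2}$ over $\{O,M,P\}$ is the code of the chain (empty if $n\le2$). The code determines the chain up to isomorphism, and a code and its reverse describe the same chain. $\mathcal{G}_n$ denotes the set of all spiro hexagonal chains with $n$ hexagons, i.e. one chain for each class of codes of length $n-2$ under identification of a word with its reverse (so $|\mathcal{G}_n|=\frac12(3^{n-2}+3^{\lfloor (n-1)/2\rfloor})$ for $n\ge2$). *)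

theory Defs
  imports Complex_Main
begin

text \<open>Hexagon labels O (ortho), M (meta), P (para): distance 1, 2, 3 in the hexagon
between its two cut-vertices.\<close>
datatype hexlab = Ortho | Meta | Para

fun lab_dist :: "hexlab \<Rightarrow> nat" where
  "lab_dist Ortho = 1" | "lab_dist Meta = 2" | "lab_dist Para = 3"

text \<open>Hexagon H_k has positions 0..5 around the 6-cycle.  For k \<ge> 1, position 0
of H_k is the cut-vertex c_k shared with H_(k-1).  cutpos xs k is the position in H_k
of the cut-vertex c_(k+1) shared with H_(k+1); for H_0 it is chosen as 3
(irrelevant up to isomorphism, H_0 has only one cut-vertex), and for
1 \<le> k \<le> n-2 it is the distance given by the code letter x_k.\<close>
definition cutpos :: "hexlab list \<Rightarrow> nat \<Rightarrow> nat" where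
  "cutpos xs k = (if k = 0 then 3 else lab_dist (xs ! (k - 1)))"

definition rep :: "hexlab list \<Rightarrow> nat \<Rightarrow> nat \<Rightarrow> nat \<times> nat" where
  "rep xs k j = (if 0 < k \<and> j = 0 then (k - 1, cutpos xs (k - 1)) else (k, j))"

definition spiro_V :: "nat \<Rightarrow> hexlab list \<Rightarrow> (nat \<times> nat) set" where
  "spiro_V n xs = {(0, j) | j. j < 6} \<union> {(k, j) | k j. 1 \<le> k \<and> k < n \<and> 1 \<le> j \<and> j < 6}"

definition spiro_E :: "nat \<Rightarrow> hexlab list \<Rightarrow> ((nat \<times> nat) \<times> (nat \<times> nat)) set" where
  "spiro_E n xs =
     {(rep xs k j, rep xs k ((j + 1) mod 6)) | k j. k < n \<and> j < 6} \<union>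
     {(rep xs k ((j + 1) mod 6), rep xs k j) | k j. k < n \<and> j < 6}"

definition gdist :: "('a \<times> 'a) set \<Rightarrow> 'a \<Rightarrow> 'a \<Rightarrow> nat" where
  "gdist E u v = (LEAST m. (u, v) \<in> E ^^ m)"

text \<open>Wiener index: sum of distances over unordered pairs of distinct vertices
(= half of the sum over ordered pairs).\<close>
definition wiener :: "'a set \<Rightarrow> ('a \<times> 'a) set \<Rightarrow> real" where
  "wiener V E = (\<Sum>u\<in>V. \<Sum>v\<in>V. real (gdist E u v)) / 2"

definition spiro_wiener :: "nat \<Rightarrow> hexlab list \<Rightarrow> real" where
  "spiro_wiener n xs = wiener (spiro_V n xs) (spiro_E n xs)"

text \<open>The set \<G>_n: codes of length n-2 identified with their reverses.\<close>
definition spiro_classes :: "nat \<Rightarrow> hexlab list set set" where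
  "spiro_classes n = {{xs, rev xs} | xs. length xs = n - 2}"

end

theory Submission
  imports Defs
begin

text \<open>
  Walking from a vertex of hexagon \<open>H\<^sub>k\<close> to a vertex of \<open>H\<^sub>l\<close>, \<open>k < l\<close>, one must pass the
  cut-vertices \<open>c\<^sub>k\<^sub>+\<^sub>1, \<dots>, c\<^sub>l\<close> in turn, so the distance is the cycle distance to
  \<open>c\<^sub>k\<^sub>+\<^sub>1\<close>, plus the code distances \<open>d(x\<^sub>k\<^sub>+\<^sub>1), \<dots>, d(x\<^sub>l\<^sub>-\<^sub>1)\<close>, plus the cycle distance
  from \<open>c\<^sub>l\<close>. Summing these explicit distances hexagon by hexagon shows that the Wiener
  index is affine in the code letters:
  \<open>W(G) = 27 n + 45 n (n - 1) + 25 \<Sum>\<^bsub>1 \<le> i \<le> n-2\<^esub> d(x\<^sub>i) i (n - 1 - i)\<close>.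
  The involution exchanging \<open>O\<close> and \<open>P\<close> commutes with reversal, hence permutes \<open>\<G>\<^sub>n\<close>,
  and replaces each \<open>d(x\<^sub>i)\<close> by \<open>4 - d(x\<^sub>i)\<close>; so on average every letter contributes as
  if it were \<open>M\<close>, and the average is the Wiener index of the all-meta chain.
\<close>

section \<open>Walks in a relation\<close>

lemma relpow_increment_bound:
  fixes f :: "'a \<Rightarrow> nat"
  assumes step: "\<And>w v. (w, v) \<in> R \<Longrightarrow> f v \<le> f w + 1"
  shows "(u, v) \<in> R ^^ m \<Longrightarrow> f v \<le> f u + m"
proof (induction m arbitrary: v)
  case (Suc m)
  then obtain w where "(u, w) \<in> R ^^ m" "(w, v) \<in> R"
    by (auto elim: relpow_Suc_E)
  with Suc.IH step show ?case by fastforce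
qed simp

lemma relpow_sym: "sym R \<Longrightarrow> (u, v) \<in> R ^^ m \<Longrightarrow> (v, u) \<in> R ^^ m"
proof (induction m arbitrary: v)
  case (Suc m)
  then obtain w where "(u, w) \<in> R ^^ m" "(w, v) \<in> R"
    by (auto elim: relpow_Suc_E)
  with Suc show ?case by (blast intro: relpow_Suc_I2 dest: symD)
qed simp

section \<open>Distance on a hexagon\<close>

definition cyc6_dist :: "nat \<Rightarrow> nat \<Rightarrow> nat" where
  "cyc6_dist a b = (let d = (if a \<le> b then b - a else a - b) in min d (6 - d))"

lemma less_6_iff: "(a::nat) < 6 \<longleftrightarrow> a \<in> {0,1,2,3,4,5}"
  by auto

lemma cyc6_dist_commute: "cyc6_dist a b = cyc6_dist b a"
  by (auto simp: cyc6_dist_def Let_def)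

lemma cyc6_dist_self [simp]: "cyc6_dist a a = 0"
  by (simp add: cyc6_dist_def)

lemma cyc6_dist_eq_0_iff: "a < 6 \<Longrightarrow> b < 6 \<Longrightarrow> cyc6_dist a b = 0 \<longleftrightarrow> a = b"
  unfolding less_6_iff by (auto simp: cyc6_dist_def)

lemma cyc6_dist_succ:
  "q < 6 \<Longrightarrow> j < 6 \<Longrightarrow>
     cyc6_dist q ((j + 1) mod 6) \<le> cyc6_dist q j + 1 \<and> cyc6_dist q j \<le> cyc6_dist q ((j + 1) mod 6) + 1"
  unfolding less_6_iff by (auto simp: cyc6_dist_def)

lemma cyc6_dist_neighbour_closer:
  "a < 6 \<Longrightarrow> b < 6 \<Longrightarrow> a \<noteq> b \<Longrightarrow>
     cyc6_dist ((a + 1) mod 6) b + 1 = cyc6_dist a b \<or> cyc6_dist ((a + 5) mod 6) b + 1 = cyc6_dist a b"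
  unfolding less_6_iff by (auto simp: cyc6_dist_def)

lemma cyc6_dist_0_left: "c \<in> {1,2,3} \<Longrightarrow> cyc6_dist 0 c = c"
  by (auto simp: cyc6_dist_def)

lemma sum_cyc6_dist: "(\<Sum>a<6. \<Sum>b<6. real (cyc6_dist a b)) = 54"
  by (simp add: cyc6_dist_def lessThan_nat_numeral)

lemma sum_cyc6_dist_nonzero: "(\<Sum>a\<in>{1..<6}. \<Sum>b\<in>{1..<6}. real (cyc6_dist a b)) = 36"
  by (simp add: cyc6_dist_def atLeastLessThanSuc numeral_eq_Suc)

lemma sum_cyc6_dist_0: "(\<Sum>b\<in>{1..<6}. real (cyc6_dist 0 b)) = 9"
  by (simp add: cyc6_dist_def atLeastLessThanSuc numeral_eq_Suc)

lemma sum_cyc6_dist_3: "(\<Sum>a<6. real (cyc6_dist a 3)) = 9"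
  by (simp add: cyc6_dist_def lessThan_nat_numeral)

lemma sum_cyc6_dist_nonzero_to:
  "c \<in> {1,2,3} \<Longrightarrow> (\<Sum>b\<in>{1..<6}. real (cyc6_dist b c)) = 9 - real c"
  by (auto simp: cyc6_dist_def atLeastLessThanSuc numeral_eq_Suc)

section \<open>Distances in a spiro chain\<close>

lemma cutpos_in_123: "cutpos xs t \<in> {1,2,3}"
proof (cases "t = 0")
  case False
  then show ?thesis unfolding cutpos_def by (cases "xs ! (t - 1)") auto
qed (simp add: cutpos_def)

lemma cutpos_neq_0 [simp]: "cutpos xs t \<noteq> 0"
  using cutpos_in_123[of xs t] by auto

lemma cutpos_less_6 [simp]: "cutpos xs t < 6"
  using cutpos_in_123[of xs t] by auto

lemma cyc6_dist_0_cutpos [simp]: "cyc6_dist 0 (cutpos xs t) = cutpos xs t"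
  using cyc6_dist_0_left[OF cutpos_in_123] .

text \<open>\<open>cut_offset xs l - cut_offset xs k\<close> is the distance from \<open>c\<^sub>k\<close> to \<open>c\<^sub>l\<close> for \<open>1 \<le> k \<le> l\<close>.\<close>

definition cut_offset :: "hexlab list \<Rightarrow> nat \<Rightarrow> nat" where
  "cut_offset xs i = (\<Sum>t\<in>{1..<i}. cutpos xs t)"

lemma cut_offset_Suc: "1 \<le> i \<Longrightarrow> cut_offset xs (Suc i) = cut_offset xs i + cutpos xs i"
  unfolding cut_offset_def by (simp add: sum.atLeastLessThan_Suc)

lemma cut_offset_mono: "i \<le> j \<Longrightarrow> cut_offset xs i \<le> cut_offset xs j"
  unfolding cut_offset_def by (rule sum_mono2) auto

text \<open>Vertex \<open>(k, a)\<close> is position \<open>a\<close> of \<open>H\<^sub>k\<close>; the distance between hexagons passes through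
  \<open>c\<^sub>k\<^sub>+\<^sub>1 = (k, cutpos xs k)\<close>, the cut-vertices in between, and \<open>c\<^sub>l = (l, 0)\<close>.\<close>

fun chain_dist :: "hexlab list \<Rightarrow> nat \<times> nat \<Rightarrow> nat \<times> nat \<Rightarrow> nat" where
  "chain_dist xs (k, a) (l, b) =
     (if k = l then cyc6_dist a b
      else if k < l then cyc6_dist a (cutpos xs k) + (cut_offset xs l - cut_offset xs (Suc k)) + cyc6_dist 0 b
      else cyc6_dist b (cutpos xs l) + (cut_offset xs k - cut_offset xs (Suc l)) + cyc6_dist 0 a)"

lemma chain_dist_commute: "chain_dist xs u v = chain_dist xs v u"
  by (cases u; cases v) (auto simp: cyc6_dist_commute)

lemma chain_dist_self [simp]: "chain_dist xs u u = 0"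
  by (cases u) simp

lemma chain_dist_cut_vertex: "chain_dist xs u (Suc l, 0) = chain_dist xs u (l, cutpos xs l)"
proof (cases u)
  case (Pair k a)
  consider "k = Suc l" | "k = l" | "k < l" | "Suc l < k" by linarith
  then show ?thesis
  proof cases
    case 3
    then have "cut_offset xs (Suc k) \<le> cut_offset xs l"
      by (intro cut_offset_mono) simp
    with 3 show ?thesis by (simp add: Pair cut_offset_Suc)
  next
    case 4
    then have "cut_offset xs (Suc (Suc l)) \<le> cut_offset xs k"
      by (intro cut_offset_mono) simp
    with 4 show ?thesis by (simp add: Pair cut_offset_Suc)
  qed (auto simp: Pair cyc6_dist_commute)
qed

lemma chain_dist_rep: "chain_dist xs u (rep xs k p) = chain_dist xs u (k, p)"
  using chain_dist_cut_vertex[of xs u "k - 1"] by (auto simp: rep_def)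

text \<open>Seen from a fixed vertex, every hexagon is entered through a single vertex \<open>q\<close>.\<close>

lemma chain_dist_to_hexagon:
  assumes "a < 6"
  shows "\<exists>q \<alpha>. q < 6 \<and> (\<forall>p. chain_dist xs (k', a) (k, p) = \<alpha> + cyc6_dist q p)"
proof -
  consider "k' = k" | "k' < k" | "k < k'" by linarith
  then show ?thesis
  proof cases
    case 1
    then show ?thesis using assms by auto
  next
    case 2
    then have "chain_dist xs (k', a) (k, p)
        = (cyc6_dist a (cutpos xs k') + (cut_offset xs k - cut_offset xs (Suc k'))) + cyc6_dist 0 p" for p
      by simp
    with zero_less_numeral show ?thesis by blast
  next
    case 3
    then have "chain_dist xs (k', a) (k, p)
        = (cut_offset xs k' - cut_offset xs (Suc k) + cyc6_dist 0 a) + cyc6_dist (cutpos xs k) p" for p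
      by (simp add: cyc6_dist_commute)
    with cutpos_less_6 show ?thesis by blast
  qed
qed

lemma spiro_V_iff:
  "(k, a) \<in> spiro_V n xs \<longleftrightarrow> (k = 0 \<and> a < 6) \<or> (1 \<le> k \<and> k < n \<and> 1 \<le> a \<and> a < 6)"
  unfolding spiro_V_def by auto

lemma rep_vertex: "(k, a) \<in> spiro_V n xs \<Longrightarrow> rep xs k a = (k, a)"
  unfolding spiro_V_iff rep_def by auto

lemma spiro_E_cases:
  assumes "(x, y) \<in> spiro_E n xs"
  obtains k j where "k < n" "j < 6"
    "(x, y) = (rep xs k j, rep xs k ((j + 1) mod 6)) \<or> (x, y) = (rep xs k ((j + 1) mod 6), rep xs k j)"
  using assms unfolding spiro_E_def by blast

lemma spiro_E_cycle_edge: "k < n \<Longrightarrow> j < 6 \<Longrightarrow> (rep xs k j, rep xs k ((j + 1) mod 6)) \<in> spiro_E n xs"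
  unfolding spiro_E_def by blast

lemma sym_spiro_E: "sym (spiro_E n xs)"
  unfolding sym_def spiro_E_def by blast

lemma chain_dist_edge:
  assumes u: "u \<in> spiro_V n xs" and e: "(w, v) \<in> spiro_E n xs"
  shows "chain_dist xs u v \<le> chain_dist xs u w + 1"
proof -
  obtain k j where kj: "k < n" "j < 6" and
    wv: "(w, v) = (rep xs k j, rep xs k ((j + 1) mod 6)) \<or> (w, v) = (rep xs k ((j + 1) mod 6), rep xs k j)"
    using e by (rule spiro_E_cases)
  obtain k' a where u_eq: "u = (k', a)" and "a < 6"
    using u by (cases u) (auto simp: spiro_V_iff)
  then obtain q \<alpha> where "q < 6" and q: "\<And>p. chain_dist xs u (k, p) = \<alpha> + cyc6_dist q p"
    using chain_dist_to_hexagon by blast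
  from wv show ?thesis
    using cyc6_dist_succ[OF \<open>q < 6\<close> \<open>j < 6\<close>] by (auto simp: chain_dist_rep q)
qed

lemma hexagon_walk:
  assumes k: "k < n" and b: "b < 6"
  shows "a < 6 \<Longrightarrow> (rep xs k a, rep xs k b) \<in> spiro_E n xs ^^ cyc6_dist a b"
proof (induction "cyc6_dist a b" arbitrary: a)
  case 0
  then show ?case using cyc6_dist_eq_0_iff[OF _ b] by simp
next
  case (Suc d)
  then have "a \<noteq> b" by auto
  have "((a + 5) mod 6 + 1) mod 6 = a"
    using \<open>a < 6\<close> unfolding less_6_iff by auto
  then have edge_back: "(rep xs k a, rep xs k ((a + 5) mod 6)) \<in> spiro_E n xs"
    using symD[OF sym_spiro_E spiro_E_cycle_edge[OF k, of "(a + 5) mod 6" xs]] by simp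
  obtain a' where "a' < 6" "cyc6_dist a' b = d" "(rep xs k a, rep xs k a') \<in> spiro_E n xs"
  proof (cases "cyc6_dist ((a + 1) mod 6) b + 1 = cyc6_dist a b")
    case True
    then show ?thesis
      using that[of "(a + 1) mod 6"] Suc.hyps(2) spiro_E_cycle_edge[OF k \<open>a < 6\<close>] by simp
  next
    case False
    then show ?thesis
      using that[of "(a + 5) mod 6"] Suc.hyps(2) edge_back
        cyc6_dist_neighbour_closer[OF \<open>a < 6\<close> b \<open>a \<noteq> b\<close>] by simp
  qed
  with Suc.hyps(1) Suc.hyps(2) show ?case by (metis relpow_Suc_I2)
qed

lemma rep_Suc_0: "rep xs (Suc l) 0 = rep xs l (cutpos xs l)"
  by (simp add: rep_def)

lemma cut_vertex_walk:
  assumes "1 \<le> k" "k \<le> l"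
  shows "l < n \<Longrightarrow> (rep xs k 0, rep xs l 0) \<in> spiro_E n xs ^^ (cut_offset xs l - cut_offset xs k)"
  using assms(2)
proof (induction l rule: dec_induct)
  case (step l)
  have walk: "(rep xs k 0, rep xs l 0) \<in> spiro_E n xs ^^ (cut_offset xs l - cut_offset xs k)"
    using step by simp
  have hexagon: "(rep xs l 0, rep xs (Suc l) 0) \<in> spiro_E n xs ^^ cutpos xs l"
    using hexagon_walk[of l n "cutpos xs l" 0 xs] step.prems by (simp add: rep_Suc_0)
  have "cut_offset xs (Suc l) - cut_offset xs k = (cut_offset xs l - cut_offset xs k) + cutpos xs l"
    using cut_offset_Suc[of l xs] cut_offset_mono[OF step.hyps(1), of xs] assms(1) step.hyps(1) by simp
  then show ?case using walk hexagon by (auto simp: relpow_add)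
qed simp

lemma walk_of_chain_dist_less:
  assumes u: "(k, a) \<in> spiro_V n xs" and v: "(l, b) \<in> spiro_V n xs" and "k < l"
  shows "((k, a), (l, b)) \<in> spiro_E n xs ^^ chain_dist xs (k, a) (l, b)"
proof -
  have "l < n" "k < n" "a < 6" "b < 6" using u v \<open>k < l\<close> unfolding spiro_V_iff by auto
  have "(rep xs k a, rep xs k (cutpos xs k)) \<in> spiro_E n xs ^^ cyc6_dist a (cutpos xs k)"
    using hexagon_walk[OF \<open>k < n\<close> cutpos_less_6 \<open>a < 6\<close>] .
  moreover have "(rep xs (Suc k) 0, rep xs l 0) \<in> spiro_E n xs ^^ (cut_offset xs l - cut_offset xs (Suc k))"
    using cut_vertex_walk[of "Suc k" l n xs] \<open>k < l\<close> \<open>l < n\<close> by simp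
  moreover have "(rep xs l 0, rep xs l b) \<in> spiro_E n xs ^^ cyc6_dist 0 b"
    using hexagon_walk[OF \<open>l < n\<close> \<open>b < 6\<close>] by simp
  ultimately have "(rep xs k a, rep xs l b) \<in> spiro_E n xs ^^
      (cyc6_dist a (cutpos xs k) + (cut_offset xs l - cut_offset xs (Suc k)) + cyc6_dist 0 b)"
    unfolding relpow_add rep_Suc_0[symmetric] by blast
  then show ?thesis using \<open>k < l\<close> rep_vertex[OF u] rep_vertex[OF v] by simp
qed

lemma walk_of_chain_dist:
  assumes "1 \<le> n" and u: "u \<in> spiro_V n xs" and v: "v \<in> spiro_V n xs"
  shows "(u, v) \<in> spiro_E n xs ^^ chain_dist xs u v"
proof -
  obtain k a l b where uv: "u = (k, a)" "v = (l, b)" by (cases u, cases v)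
  consider "k = l" | "k < l" | "l < k" by linarith
  then show ?thesis
  proof cases
    case 1
    have "k < n" "a < 6" "b < 6" using u v \<open>1 \<le> n\<close> unfolding uv spiro_V_iff by auto
    then show ?thesis using hexagon_walk[of k n b a xs] rep_vertex u v 1 by (simp add: uv)
  next
    case 2
    then show ?thesis using walk_of_chain_dist_less u v uv by simp
  next
    case 3
    then have "(v, u) \<in> spiro_E n xs ^^ chain_dist xs v u"
      using walk_of_chain_dist_less u v uv by simp
    then show ?thesis using relpow_sym[OF sym_spiro_E] chain_dist_commute by metis
  qed
qed

lemma gdist_spiro_E:
  assumes "1 \<le> n" and u: "u \<in> spiro_V n xs" and v: "v \<in> spiro_V n xs"
  shows "gdist (spiro_E n xs) u v = chain_dist xs u v"
proof -
  have "chain_dist xs u v \<le> m" if "(u, v) \<in> spiro_E n xs ^^ m" for m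
    using relpow_increment_bound[where f = "chain_dist xs u", OF chain_dist_edge[OF u] that] by simp
  then show ?thesis
    unfolding gdist_def by (intro Least_equality walk_of_chain_dist assms)
qed

section \<open>The Wiener index of a chain\<close>

lemma spiro_V_1: "spiro_V 1 xs = Pair 0 ` {..<6}"
  unfolding spiro_V_def by auto

lemma spiro_V_Suc: "1 \<le> n \<Longrightarrow> spiro_V (Suc n) xs = spiro_V n xs \<union> Pair n ` {1..<6}"
  unfolding spiro_V_def by auto

lemma spiro_V_disjoint_new_hexagon: "1 \<le> n \<Longrightarrow> spiro_V n xs \<inter> Pair n ` {1..<6} = {}"
  unfolding spiro_V_def by auto

lemma finite_spiro_V: "finite (spiro_V n xs)"
  by (rule finite_subset[of _ "{..n} \<times> {..<6}"]) (auto simp: spiro_V_def)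

lemma sum_spiro_V_Suc:
  assumes "1 \<le> n"
  shows "(\<Sum>u\<in>spiro_V (Suc n) xs. f u) = (\<Sum>u\<in>spiro_V n xs. f u) + (\<Sum>b\<in>{1..<6}. f (n, b))"
proof -
  have "(\<Sum>u\<in>spiro_V (Suc n) xs. f u) = (\<Sum>u\<in>spiro_V n xs. f u) + (\<Sum>u\<in>Pair n ` {1..<6}. f u)"
    unfolding spiro_V_Suc[OF assms]
    using finite_spiro_V spiro_V_disjoint_new_hexagon[OF assms] by (intro sum.union_disjoint) auto
  then show ?thesis by (simp add: sum.reindex inj_on_def)
qed

lemma card_spiro_V: "1 \<le> n \<Longrightarrow> card (spiro_V n xs) = 5 * n + 1"
proof (induction n rule: nat_induct_at_least)
  case base
  show ?case unfolding spiro_V_1 by (simp add: card_image inj_on_def)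
next
  case (Suc n)
  have "card (Pair n ` {1..<6::nat}) = 5"
    by (simp add: card_image inj_on_def)
  then show ?case
    unfolding spiro_V_Suc[OF Suc.hyps]
    using Suc.IH finite_spiro_V spiro_V_disjoint_new_hexagon[OF Suc.hyps]
    by (subst card_Un_disjoint) auto
qed

text \<open>Distance from vertex \<open>u\<close> to the cut-vertex \<open>c\<^sub>n\<close>.\<close>

fun dist_to_cut :: "hexlab list \<Rightarrow> nat \<Rightarrow> nat \<times> nat \<Rightarrow> nat" where
  "dist_to_cut xs n (k, a) = cyc6_dist a (cutpos xs k) + (cut_offset xs n - cut_offset xs (Suc k))"

lemma chain_dist_new_hexagon:
  "1 \<le> n \<Longrightarrow> u \<in> spiro_V n xs \<Longrightarrow> chain_dist xs u (n, b) = dist_to_cut xs n u + cyc6_dist 0 b"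
  by (cases u) (auto simp: spiro_V_iff)

lemma dist_to_cut_Suc:
  assumes "1 \<le> n" and u: "u \<in> spiro_V n xs"
  shows "dist_to_cut xs (Suc n) u = dist_to_cut xs n u + cutpos xs n"
proof (cases u)
  case (Pair k a)
  with u \<open>1 \<le> n\<close> have "cut_offset xs (Suc k) \<le> cut_offset xs n"
    by (intro cut_offset_mono) (auto simp: spiro_V_iff)
  with Pair show ?thesis using cut_offset_Suc[OF \<open>1 \<le> n\<close>, of xs] by simp
qed

definition total_dist_to_cut :: "hexlab list \<Rightarrow> nat \<Rightarrow> real" where
  "total_dist_to_cut xs n = (\<Sum>u\<in>spiro_V n xs. real (dist_to_cut xs n u))"

lemma total_dist_to_cut_Suc:
  assumes n: "1 \<le> n"
  shows "total_dist_to_cut xs (Suc n) =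
           total_dist_to_cut xs n + 5 * real n * real (cutpos xs n) + 9"
proof -
  have "(\<Sum>u\<in>spiro_V n xs. real (dist_to_cut xs (Suc n) u))
          = total_dist_to_cut xs n + real (5 * n + 1) * real (cutpos xs n)"
    unfolding total_dist_to_cut_def using dist_to_cut_Suc[OF n] card_spiro_V[OF n, of xs]
    by (simp add: sum.distrib cong: sum.cong)
  moreover have "(\<Sum>b\<in>{1..<6}. real (dist_to_cut xs (Suc n) (n, b))) = 9 - real (cutpos xs n)"
    using sum_cyc6_dist_nonzero_to[OF cutpos_in_123] by simp
  ultimately show ?thesis
    unfolding total_dist_to_cut_def sum_spiro_V_Suc[OF n] by (simp add: algebra_simps)
qed

lemma total_dist_to_cut_eq:
  "1 \<le> n \<Longrightarrow> total_dist_to_cut xs n = 9 * real n + 5 * (\<Sum>t\<in>{1..<n}. real (cutpos xs t) * real t)"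
proof (induction n rule: nat_induct_at_least)
  case base
  have "total_dist_to_cut xs 1 = (\<Sum>a<6. real (cyc6_dist a 3))"
    unfolding total_dist_to_cut_def spiro_V_1 by (simp add: sum.reindex inj_on_def cutpos_def)
  then show ?case by (simp add: sum_cyc6_dist_3)
next
  case (Suc n)
  then show ?case by (simp add: total_dist_to_cut_Suc sum.atLeastLessThan_Suc algebra_simps)
qed

definition chain_dist_sum :: "hexlab list \<Rightarrow> nat \<Rightarrow> real" where
  "chain_dist_sum xs n = (\<Sum>u\<in>spiro_V n xs. \<Sum>v\<in>spiro_V n xs. real (chain_dist xs u v))"

lemma chain_dist_sum_Suc:
  assumes n: "1 \<le> n"
  shows "chain_dist_sum xs (Suc n) =
           chain_dist_sum xs n + 10 * total_dist_to_cut xs n + 18 * real (5 * n + 1) + 36"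
proof -
  let ?V = "spiro_V n xs"
  have cross: "(\<Sum>u\<in>?V. \<Sum>b\<in>{1..<6}. real (chain_dist xs u (n, b)))
                 = 5 * total_dist_to_cut xs n + 9 * real (5 * n + 1)"
    using chain_dist_new_hexagon[OF n] sum_cyc6_dist_0 card_spiro_V[OF n, of xs]
    by (simp add: total_dist_to_cut_def sum.distrib sum_distrib_left)
  have cross': "(\<Sum>b\<in>{1..<6}. \<Sum>v\<in>?V. real (chain_dist xs (n, b) v))
                 = (\<Sum>u\<in>?V. \<Sum>b\<in>{1..<6}. real (chain_dist xs u (n, b)))"
    by (subst sum.swap) (simp add: chain_dist_commute)
  show ?thesis
    unfolding chain_dist_sum_def sum_spiro_V_Suc[OF n] sum.distrib cross' cross
    using sum_cyc6_dist_nonzero by simp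
qed

lemma chain_dist_sum_eq:
  "1 \<le> n \<Longrightarrow> chain_dist_sum xs n = 54 * real n + 90 * real n * (real n - 1)
     + 50 * (\<Sum>t\<in>{1..<n}. real (cutpos xs t) * real t * (real n - 1 - real t))"
proof (induction n rule: nat_induct_at_least)
  case base
  have "chain_dist_sum xs 1 = (\<Sum>a<6. \<Sum>b<6. real (cyc6_dist a b))"
    unfolding chain_dist_sum_def spiro_V_1 by (simp add: sum.reindex inj_on_def)
  then show ?case by (simp add: sum_cyc6_dist)
next
  case (Suc n)
  have "(\<Sum>t\<in>{1..<Suc n}. real (cutpos xs t) * real t * (real (Suc n) - 1 - real t))
     = (\<Sum>t\<in>{1..<n}. real (cutpos xs t) * real t * (real n - 1 - real t))
       + (\<Sum>t\<in>{1..<n}. real (cutpos xs t) * real t)"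
    using Suc.hyps by (simp add: sum.atLeastLessThan_Suc sum.distrib[symmetric] algebra_simps)
  then show ?case
    using Suc chain_dist_sum_Suc total_dist_to_cut_eq by (simp add: algebra_simps)
qed

definition pos_weight :: "nat \<Rightarrow> nat \<Rightarrow> real" where
  "pos_weight m i = (real i + 1) * (real m - real i)"

text \<open>\<open>xs ! i\<close> is the letter \<open>x\<^sub>i\<^sub>+\<^sub>1\<close>, so \<open>code_weight xs = \<Sum>\<^sub>i d(x\<^sub>i) i (n - 1 - i)\<close>.\<close>

definition code_weight :: "hexlab list \<Rightarrow> real" where
  "code_weight xs = (\<Sum>i<length xs. real (lab_dist (xs ! i)) * pos_weight (length xs) i)"

lemma sum_cutpos_eq_code_weight:
  assumes "1 \<le> n" and len: "length xs = n - 2"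
  shows "(\<Sum>t\<in>{1..<n}. real (cutpos xs t) * real t * (real n - 1 - real t)) = code_weight xs"
proof (cases "n = 1")
  case True
  then show ?thesis using len by (simp add: code_weight_def)
next
  case False
  with \<open>1 \<le> n\<close> obtain m where n: "n = Suc (Suc m)"
    by (metis One_nat_def Suc_le_D le_SucE not_less_eq_eq)
  have "(\<Sum>t\<in>{1..<n}. real (cutpos xs t) * real t * (real n - 1 - real t))
      = (\<Sum>i<Suc m. real (cutpos xs (Suc i)) * real (Suc i) * (real n - 1 - real (Suc i)))"
    unfolding n One_nat_def atLeast0LessThan[symmetric] by (rule sum.shift_bounds_Suc_ivl)
  also have "\<dots> = (\<Sum>i<m. real (cutpos xs (Suc i)) * real (Suc i) * (real m - real i))"
    by (simp add: n)
  also have "\<dots> = code_weight xs"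
    unfolding code_weight_def pos_weight_def len n
    by (intro sum.cong) (auto simp: cutpos_def algebra_simps)
  finally show ?thesis .
qed

lemma spiro_wiener_eq:
  assumes "1 \<le> n" and "length xs = n - 2"
  shows "spiro_wiener n xs = 27 * real n + 45 * real n * (real n - 1) + 25 * code_weight xs"
proof -
  have "spiro_wiener n xs = chain_dist_sum xs n / 2"
    unfolding spiro_wiener_def wiener_def chain_dist_sum_def
    using gdist_spiro_E[OF assms(1)] by (simp cong: sum.cong)
  then show ?thesis
    using chain_dist_sum_eq[OF assms(1)] sum_cutpos_eq_code_weight[OF assms] by simp
qed

section \<open>Averaging over \<open>\<G>\<^sub>n\<close>\<close>

lemma code_weight_rev: "code_weight (rev xs) = code_weight xs"
proof -
  let ?m = "length xs"
  let ?h = "\<lambda>j. real (lab_dist (xs ! j)) * pos_weight ?m j"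
  have "code_weight (rev xs) = (\<Sum>i<?m. ?h (?m - Suc i))"
    unfolding code_weight_def pos_weight_def
    by (rule sum.cong) (auto simp: rev_nth of_nat_diff algebra_simps)
  also have "\<dots> = code_weight xs"
    unfolding code_weight_def by (rule sum.nat_diff_reindex)
  finally show ?thesis .
qed

fun mirror_lab :: "hexlab \<Rightarrow> hexlab" where
  "mirror_lab Ortho = Para" | "mirror_lab Para = Ortho" | "mirror_lab Meta = Meta"

lemma mirror_lab_mirror_lab [simp]: "mirror_lab (mirror_lab x) = x"
  by (cases x) auto

lemma lab_dist_mirror_lab: "real (lab_dist (mirror_lab x)) = 4 - real (lab_dist x)"
  by (cases x) auto

lemma code_weight_mirror:
  "code_weight (map mirror_lab xs) = 4 * (\<Sum>i<length xs. pos_weight (length xs) i) - code_weight xs"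
  unfolding code_weight_def
  by (simp add: lab_dist_mirror_lab left_diff_distrib sum_subtractf sum_distrib_left)

lemma gauss_sum_lessThan: "(\<Sum>i<m. real i + 1) = real m * (real m + 1) / 2"
  by (induction m) (simp_all add: algebra_simps add_divide_distrib)

lemma sum_pos_weight: "(\<Sum>i<m. pos_weight m i) = real m * (real m + 1) * (real m + 2) / 6"
proof (induction m)
  case (Suc m)
  have "(\<Sum>i<Suc m. pos_weight (Suc m) i) = (\<Sum>i<m. pos_weight m i + (real i + 1)) + (real m + 1)"
    by (simp add: pos_weight_def algebra_simps)
  also have "\<dots> = (\<Sum>i<m. pos_weight m i) + real m * (real m + 1) / 2 + (real m + 1)"
    using gauss_sum_lessThan[of m] by (simp add: sum.distrib)
  finally show ?case using Suc.IH by (simp add: field_simps)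
qed (simp add: pos_weight_def)

lemma finite_spiro_classes: "finite (spiro_classes n)"
proof -
  have "(UNIV :: hexlab set) = {Ortho, Meta, Para}"
    using hexlab.exhaust by blast
  then have "finite (UNIV :: hexlab set)"
    by (metis finite.emptyI finite_insert)
  then have "finite {xs :: hexlab list. set xs \<subseteq> UNIV \<and> length xs = n - 2}"
    by (rule finite_lists_length_eq)
  then show ?thesis
    by (rule finite_subset[rotated, OF finite_Pow_iff[THEN iffD2]]) (auto simp: spiro_classes_def)
qed

lemma spiro_classes_nonempty: "spiro_classes n \<noteq> {}"
  unfolding spiro_classes_def by (auto intro: exI[of _ "replicate (n - 2) Ortho"])

definition mirror_class :: "hexlab list set \<Rightarrow> hexlab list set" where
  "mirror_class c = map mirror_lab ` c"

lemma mirror_class_mirror_class: "mirror_class (mirror_class c) = c"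
  unfolding mirror_class_def image_image by (simp add: map_idI)

lemma mirror_class_in_spiro_classes: "c \<in> spiro_classes n \<Longrightarrow> mirror_class c \<in> spiro_classes n"
  unfolding spiro_classes_def mirror_class_def by (auto simp: rev_map)

lemma spiro_wiener_of_class:
  assumes "1 \<le> n" and "length xs = n - 2"
  shows "spiro_wiener n (SOME ys. ys \<in> {xs, rev xs})
           = 27 * real n + 45 * real n * (real n - 1) + 25 * code_weight xs"
proof -
  have "(SOME ys. ys \<in> {xs, rev xs}) \<in> {xs, rev xs}"
    by (rule someI[of _ xs]) simp
  then show ?thesis
    using spiro_wiener_eq[OF assms] spiro_wiener_eq[OF assms(1), of "rev xs"] assms(2)
    by (auto simp: code_weight_rev)
qed

lemma spiro_wiener_mirror_pair:
  assumes "1 \<le> n" and c: "c \<in> spiro_classes n"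
  shows "spiro_wiener n (SOME ys. ys \<in> c) + spiro_wiener n (SOME ys. ys \<in> mirror_class c)
         = 2 * (27 * real n + 45 * real n * (real n - 1)) + 100 * (\<Sum>i<n - 2. pos_weight (n - 2) i)"
proof -
  obtain xs where c_eq: "c = {xs, rev xs}" and len: "length xs = n - 2"
    using c unfolding spiro_classes_def by auto
  have "mirror_class c = {map mirror_lab xs, rev (map mirror_lab xs)}"
    unfolding c_eq mirror_class_def by (simp add: rev_map)
  then show ?thesis
    using spiro_wiener_of_class[OF assms(1)] len code_weight_mirror[of xs] c_eq by simp
qed

theorem theorem5p2:
  fixes n :: nat
  assumes "n \<ge> 1"
  shows "(\<Sum>c\<in>spiro_classes n. spiro_wiener n (SOME xs. xs \<in> c)) / real (card (spiro_classes n))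
         = (25 * real n ^ 3 + 60 * real n ^ 2 - 4 * real n) / 3"
proof -
  let ?C = "spiro_classes n"
  let ?W = "\<lambda>c. spiro_wiener n (SOME xs. xs \<in> c)"
  let ?K = "2 * (27 * real n + 45 * real n * (real n - 1)) + 100 * (\<Sum>i<n - 2. pos_weight (n - 2) i)"
  have "(\<Sum>c\<in>?C. ?W c) = (\<Sum>c\<in>?C. ?W (mirror_class c))"
    by (rule sum.reindex_bij_witness[where i = mirror_class and j = mirror_class])
      (auto simp: mirror_class_mirror_class mirror_class_in_spiro_classes)
  then have "2 * (\<Sum>c\<in>?C. ?W c) = (\<Sum>c\<in>?C. ?W c + ?W (mirror_class c))"
    by (simp add: sum.distrib)
  also have "\<dots> = real (card ?C) * ?K"
    using spiro_wiener_mirror_pair[OF assms] by simp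
  finally have "(\<Sum>c\<in>?C. ?W c) / real (card ?C) = ?K / 2"
    using finite_spiro_classes spiro_classes_nonempty by (simp add: field_simps)
  moreover have "real (n - 2) = real n - 2" if "n \<noteq> 1"
    using assms that by linarith
  ultimately show ?thesis
    using assms by (cases "n = 1") (auto simp: sum_pos_weight field_simps power3_eq_cube power2_eq_square)
qed

end
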